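(* For all positive integers $n$ and $k$, $$\sum_{i=1}^{k}(-1)^i\binom{ni}{k}\binom{k+1}{i+1}=(-1)^k\binom{n+k-1}{k}.$$
   Context: Binomial coefficients $\binom{m}{j}$ for nonnegative integers $m,j$ are the usual ones, with $\binom{m}{j}=0$ when $j>m$. *)

theory Defs
  imports Main
begin

end

theory Submission
  imports Defs "HOL-Computational_Algebra.Polynomial"
begin

text \<open>The alternating sum \<open>\<Sum>j\<le>m. (-1)^j C(m,j) q(j)\<close> is, up to sign, the \<open>m\<close>-th finite
difference of \<open>q\<close>, so it vanishes for every polynomial \<open>q\<close> of degree less than \<open>m\<close>.
Both sides of the identity are read off such a sum for the polynomial
\<open>q(x) = \<Prod>i<k. (n(x-1) - i)\<close> of degree \<open>k\<close> with \<open>m = k + 1\<close>: at \<open>x = i + 1\<close> it equals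
\<open>k! C(ni,k)\<close>, and at \<open>x = 0\<close> it equals \<open>(-1)^k k! C(n+k-1,k)\<close>.\<close>

lemma fact_mult_binomial_eq_prod:
  "fact k * int (x choose k) = (\<Prod>i<k. int x - int i)"
proof -
  have "real (x choose k) = (of_nat x gchoose k)"
    by (simp add: binomial_gbinomial)
  then have "real_of_int (fact k * int (x choose k)) = real_of_int (\<Prod>i<k. int x - int i)"
    using gbinomial_mult_fact[of k "of_nat x :: real"] by (simp add: atLeast0LessThan)
  then show ?thesis
    by (simp only: of_int_eq_iff)
qed

lemma alternating_binomial_sum_power:
  assumes "d < m"
  shows "(\<Sum>j\<le>m. (-1)^j * of_nat (m choose j) * of_nat j ^ d) = (0 :: 'a::comm_ring_1)"
  using assms
proof (induction m arbitrary: d)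
  case 0
  then show ?case by simp
next
  case (Suc m)
  show ?case
  proof (cases d)
    case 0
    then show ?thesis
      using choose_alternating_sum[of "Suc m", where 'a='a] by simp
  next
    case (Suc e)
    with \<open>d < Suc m\<close> have "e < m" by simp
    \<comment> \<open>\<open>j C(m+1,j) = (m+1) C(m,j-1)\<close> lowers both the exponent and the row index.\<close>
    have "(\<Sum>j\<le>Suc m. (-1)^j * of_nat (Suc m choose j) * of_nat j ^ d :: 'a)
        = (\<Sum>l\<le>m. (-1)^Suc l * (of_nat (Suc m choose Suc l) * of_nat (Suc l)) * of_nat (Suc l) ^ e)"
      by (subst sum.atMost_Suc_shift) (simp add: Suc mult_ac del: binomial_Suc_Suc of_nat_Suc)
    also have "\<dots> = - of_nat (Suc m) * (\<Sum>l\<le>m. (-1)^l * of_nat (m choose l) * (of_nat l + 1) ^ e)"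
      by (simp only: of_nat_mult[symmetric] Suc_times_binomial_eq[symmetric])
         (simp add: sum_distrib_left algebra_simps del: binomial_Suc_Suc)
    also have "(\<Sum>l\<le>m. (-1)^l * of_nat (m choose l) * (of_nat l + 1) ^ e :: 'a)
        = (\<Sum>f\<le>e. of_nat (e choose f) * (\<Sum>l\<le>m. (-1)^l * of_nat (m choose l) * of_nat l ^ f))"
    proof -
      have "(of_nat l + 1) ^ e = (\<Sum>f\<le>e. of_nat (e choose f) * (of_nat l ^ f :: 'a))" for l
        using binomial_ring[of "of_nat l :: 'a" 1 e] by (simp add: mult.commute)
      then have "(\<Sum>l\<le>m. (-1)^l * of_nat (m choose l) * (of_nat l + 1) ^ e :: 'a)
          = (\<Sum>l\<le>m. \<Sum>f\<le>e. of_nat (e choose f) * ((-1)^l * of_nat (m choose l) * of_nat l ^ f))"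
        by (simp add: sum_distrib_left mult_ac)
      then show ?thesis
        by (subst (asm) sum.swap) (simp add: sum_distrib_left)
    qed
    also have "\<dots> = 0"
      using Suc.IH \<open>e < m\<close> by simp
    finally show ?thesis by simp
  qed
qed

lemma alternating_binomial_sum_poly:
  fixes p :: "'a::comm_ring_1 poly"
  assumes "degree p < m"
  shows "(\<Sum>j\<le>m. (-1)^j * of_nat (m choose j) * poly p (of_nat j)) = 0"
proof -
  have "(\<Sum>j\<le>m. (-1)^j * of_nat (m choose j) * poly p (of_nat j))
      = (\<Sum>j\<le>m. \<Sum>i\<le>degree p. coeff p i * ((-1)^j * of_nat (m choose j) * of_nat j ^ i))"
    by (simp add: poly_altdef sum_distrib_left algebra_simps)
  also have "\<dots> = (\<Sum>i\<le>degree p. coeff p i * (\<Sum>j\<le>m. (-1)^j * of_nat (m choose j) * of_nat j ^ i))"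
    by (subst sum.swap) (simp add: sum_distrib_left)
  also have "\<dots> = 0"
    using alternating_binomial_sum_power[where 'a='a] assms by simp
  finally show ?thesis .
qed

definition shifted_falling_poly :: "nat \<Rightarrow> nat \<Rightarrow> int poly" where
  "shifted_falling_poly n k = (\<Prod>i<k. [:- int n - int i, int n:])"

lemma poly_shifted_falling_poly:
  "poly (shifted_falling_poly n k) x = (\<Prod>i<k. int n * (x - 1) - int i)"
  by (simp add: shifted_falling_poly_def poly_prod algebra_simps)

lemma degree_shifted_falling_poly: "degree (shifted_falling_poly n k) \<le> k"
proof -
  have "degree (shifted_falling_poly n k) \<le> (\<Sum>i<k. degree [:- int n - int i, int n:])"
    unfolding shifted_falling_poly_def using degree_prod_sum_le[of "{..<k}"]
    by (simp add: o_def del: degree_pCons_eq_if)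
  also have "\<dots> \<le> (\<Sum>i<k. 1)"
    by (rule sum_mono) simp
  finally show ?thesis by simp
qed

lemma poly_shifted_falling_poly_Suc:
  "poly (shifted_falling_poly n k) (int (Suc i)) = fact k * int ((n * i) choose k)"
  by (simp add: poly_shifted_falling_poly fact_mult_binomial_eq_prod)

lemma poly_shifted_falling_poly_0:
  assumes "n \<ge> 1"
  shows "poly (shifted_falling_poly n k) 0 = (-1)^k * (fact k * int ((n + k - 1) choose k))"
proof -
  have "poly (shifted_falling_poly n k) 0 = (\<Prod>i<k. (-1) * (int n + int i))"
    by (simp add: poly_shifted_falling_poly)
  also have "\<dots> = (-1)^k * (\<Prod>i<k. int n + int i)"
    by (simp only: prod.distrib prod_constant card_lessThan)
  also have "(\<Prod>i<k. int n + int i) = (\<Prod>i<k. int n + int (k - Suc i))"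
    by (rule prod.nat_diff_reindex[symmetric])
  also have "\<dots> = (\<Prod>i<k. int (n + k - 1) - int i)"
    by (rule prod.cong[OF refl]) (use assms in auto)
  also have "\<dots> = fact k * int ((n + k - 1) choose k)"
    by (rule fact_mult_binomial_eq_prod[symmetric])
  finally show ?thesis .
qed

theorem mainTheorem2:
  fixes n k :: nat
  assumes "n \<ge> 1" and "k \<ge> 1"
  shows "(\<Sum>i=1..k. (-1::int) ^ i * int ((n * i) choose k) * int ((k + 1) choose (i + 1)))
         = (-1) ^ k * int ((n + k - 1) choose k)"
proof -
  let ?p = "shifted_falling_poly n k"
  let ?f = "\<lambda>i. (-1::int) ^ i * int ((n * i) choose k) * int ((k + 1) choose (i + 1))"
  have "0 = (\<Sum>j\<le>Suc k. (-1)^j * int (Suc k choose j) * poly ?p (int j))"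
    using alternating_binomial_sum_poly[of ?p "Suc k"] degree_shifted_falling_poly[of n k] by simp
  also have "\<dots> = poly ?p 0 - fact k * (\<Sum>i\<le>k. ?f i)"
    by (subst sum.atMost_Suc_shift)
       (simp add: poly_shifted_falling_poly_Suc sum_distrib_left sum_negf algebra_simps
             del: binomial_Suc_Suc of_nat_Suc)
  also have "(\<Sum>i\<le>k. ?f i) = (\<Sum>i=1..k. ?f i)"
    using assms by (simp add: atMost_atLeast0 sum.atLeast_Suc_atMost)
  finally have "fact k * (\<Sum>i=1..k. ?f i) = fact k * ((-1)^k * int ((n + k - 1) choose k))"
    using poly_shifted_falling_poly_0[OF assms(1)] by (simp add: algebra_simps)
  then show ?thesis by simp
qed

end
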